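(* Let $p$ be an odd prime and $n\ge4$ an integer with base-$p$ expansion $n=n_0+n_1p+\cdots+n_kp^k$, $n_j\in\{0,\ldots,p-1\}$, $n_k>0$. Then: (1) if it is not the case that $n_0=\cdots=n_{k-1}=p-1$, then $c^D_{p,i}(n)=c^D_{p,-i}(n)$ for all $i\in\mathbb{Z}_p$; (2) for each $i\in\mathbb{Z}_p$, with $N:=\prod_{j=0}^k(n_j+1)$, $c^D_{p,i}(n)$ is divisible by $2^{n+2-N}$ if ($n_0>0$ and $i=0$) or $n_0=\cdots=n_{k-1}=p-1$; by $2^{n-N}$ if $n_0=0$ and $i\ne0$; and by $2^{n+1-N}$ otherwise.
   Context: A signed permutation of $[n]$ is a bijection $w$ of $\{\pm1,\ldots,\pm n\}$ with $w(-i)=-w(i)$; it is even if an even number of $w(1),\ldots,w(n)$ are negative; these form $\mathfrak{S}^D_n$. With $w(0):=-w(2)$, $D(w)=\{i\in\{0,\ldots,n-1\}: w(i)>w(i+1)\}$. A pseudo-composition of $n$ ($\alpha\models_0 n$) is a sequence $(\alpha_1,\ldots,\alpha_\ell)$ of integers with $\alpha_1\ge0$, $\alpha_2,\ldots,\alpha_\ell>0$ and sum $n$, with $D(\alpha)=\{\alpha_1,\alpha_1+\alpha_2,\ldots,\alpha_1+\cdots+\alpha_{\ell-1}\}$. Then $r^D_\alpha=|\{w\in\mathfrak{S}^D_n: D(w)=D(\alpha)\}|$ and $c^D_{p,i}(n)=|\{\alpha\models_0 n: r^D_\alpha\equiv i\pmod p\}|$. *)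

theory Defs
  imports Main "HOL-Number_Theory.Cong"
begin

definition signed_set :: "nat \<Rightarrow> int set" where
  "signed_set n = {i. 1 \<le> \<bar>i\<bar> \<and> \<bar>i\<bar> \<le> int n}"

text \<open>Signed permutations of [n], represented as functions on int that are
  bijections of the signed alphabet with w(-i) = -w(i), and the identity elsewhere
  (the last condition only serves to make the representation unique).\<close>
definition signed_perms :: "nat \<Rightarrow> (int \<Rightarrow> int) set" where
  "signed_perms n = {w. bij_betw w (signed_set n) (signed_set n)
      \<and> (\<forall>i\<in>signed_set n. w (- i) = - w i)
      \<and> (\<forall>i. i \<notin> signed_set n \<longrightarrow> w i = i)}"

definition even_signed_perms :: "nat \<Rightarrow> (int \<Rightarrow> int) set" where
  "even_signed_perms n = {w \<in> signed_perms n. even (card {i \<in> {1..int n}. w i < 0})}"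

definition wD :: "(int \<Rightarrow> int) \<Rightarrow> nat \<Rightarrow> int" where
  "wD w i = (if i = 0 then - w 2 else w (int i))"

definition descD :: "nat \<Rightarrow> (int \<Rightarrow> int) \<Rightarrow> nat set" where
  "descD n w = {i \<in> {0..<n}. wD w i > wD w (i + 1)}"

definition pseudo_comp :: "nat \<Rightarrow> nat list \<Rightarrow> bool" where
  "pseudo_comp n \<alpha> \<longleftrightarrow> \<alpha> \<noteq> [] \<and> (\<forall>j\<in>{1..<length \<alpha>}. \<alpha> ! j > 0) \<and> sum_list \<alpha> = n"

definition desc_comp :: "nat list \<Rightarrow> nat set" where
  "desc_comp \<alpha> = {sum_list (take j \<alpha>) | j. 1 \<le> j \<and> j \<le> length \<alpha> - 1}"

definition rD :: "nat \<Rightarrow> nat list \<Rightarrow> nat" where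
  "rD n \<alpha> = card {w \<in> even_signed_perms n. descD n w = desc_comp \<alpha>}"

text \<open>c^D_{p,i}(n): residues i taken in Z_p, represented by integers modulo p.\<close>
definition cD :: "nat \<Rightarrow> int \<Rightarrow> nat \<Rightarrow> nat" where
  "cD p i n = card {\<alpha>. pseudo_comp n \<alpha> \<and> [int (rD n \<alpha>) = i] (mod int p)}"

end

theory Submission
  imports Defs "HOL-Library.FuncSet" "HOL-Library.Infinite_Set"
begin

(* Descent sets identify the pseudo-compositions of n with the subsets S of {0..<n}, so
   c^D_{p,i}(n) counts the sets S with beta(S) = i (mod p), where beta(S) is the number of even
   signed permutations with descent set S.  Composing with a suitable sign change reverses all
   relevant comparisons, so beta({0..<n} - S) = beta(S).  For 2 <= x < n, relabelling absolute
   values shows that the number alpha(T) of even signed permutations with descents inside T,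
   x in T, is a multiple of (n choose x); Moebius inversion then gives
   beta(insert x S) = - beta(S) (mod p) whenever p divides (n choose x).  Hence the set C of
   these positions x acts on residues by signs: the classes i and -i are matched, and C together
   with complementation contributes the factor 2^|C| (one more when i = 0).  By Lucas's theorem
   at most prod (d_j + 1) binomials (n choose x) are prime to p, which bounds |C| from below;
   C is empty only when all lower digits are p - 1, and then n + 1 = prod (d_j + 1). *)

section \<open>Binomial coefficients modulo a prime\<close>

lemma choose_prime_cong:
  assumes "prime p" "k \<le> p"
  shows "[p choose k = of_bool (k = 0 \<or> k = p)] (mod p)"
proof (cases "k = 0 \<or> k = p")
  case False
  then have "p dvd (p choose k)"
    using assms dvd_choose_prime[of k p] by (auto simp: prime_gt_0_nat)
  then show ?thesis using False by (simp add: cong_0_iff)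
qed auto

lemma choose_add_prime_cong:
  assumes "prime p"
  shows "[(m + p) choose j = (m choose j) + (if p \<le> j then m choose (j - p) else 0)] (mod p)"
proof -
  have p0: "p > 0" using assms prime_gt_0_nat by blast
  have "(m + p) choose j = (\<Sum>k\<le>j. (m choose k) * (p choose (j - k)))"
    by (rule vandermonde[symmetric])
  also have "[\<dots> = (\<Sum>k\<le>j. (m choose k) * of_bool (k = j \<or> k + p = j))] (mod p)"
  proof (intro cong_sum cong_scalar_left)
    fix k assume k: "k \<in> {..j}"
    show "[p choose (j - k) = of_bool (k = j \<or> k + p = j)] (mod p)"
    proof (cases "j - k \<le> p")
      case True
      moreover have "(j - k = 0 \<or> j - k = p) \<longleftrightarrow> (k = j \<or> k + p = j)" using k by auto
      ultimately show ?thesis using choose_prime_cong[OF assms True] by simp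
    qed (auto simp: binomial_eq_0)
  qed
  also have "(\<Sum>k\<le>j. (m choose k) * of_bool (k = j \<or> k + p = j))
      = (\<Sum>k\<in>{k. k \<le> j \<and> (k = j \<or> k + p = j)}. m choose k)"
    by (rule sum.mono_neutral_cong_right) auto
  also have "{k. k \<le> j \<and> (k = j \<or> k + p = j)} = (if p \<le> j then {j, j - p} else {j})"
    using p0 by auto
  finally show ?thesis using p0 by (auto split: if_splits)
qed

lemma choose_mult_prime_cong:
  assumes "prime p"
  shows "[(p * q) choose j = (if p dvd j then q choose (j div p) else 0)] (mod p)"
proof (induction q arbitrary: j)
  case 0
  then show ?case by (cases "j = 0") (auto elim!: dvdE simp: binomial_eq_0)
next
  case (Suc q)
  have p0: "p > 0" using assms prime_gt_0_nat by blast
  have "[(p * Suc q) choose j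
      = ((p * q) choose j) + (if p \<le> j then (p * q) choose (j - p) else 0)] (mod p)"
    using choose_add_prime_cong[OF assms, of "p * q" j] by (simp add: add.commute)
  also have "[((p * q) choose j) + (if p \<le> j then (p * q) choose (j - p) else 0)
      = (if p dvd j then q choose (j div p) else 0)
       + (if p \<le> j then (if p dvd (j - p) then q choose ((j - p) div p) else 0) else 0)] (mod p)"
    using Suc.IH by (intro cong_add) auto
  also have "(if p dvd j then q choose (j div p) else 0)
       + (if p \<le> j then (if p dvd (j - p) then q choose ((j - p) div p) else 0) else 0)
      = (if p dvd j then Suc q choose (j div p) else 0)"
  proof (cases "p \<le> j")
    case True
    then have "p dvd (j - p) \<longleftrightarrow> p dvd j" "j div p = Suc ((j - p) div p)"
      using p0 by (auto simp: dvd_minus_self le_div_geq)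
    then show ?thesis using True by simp
  next
    case False
    then show ?thesis using p0 by (auto elim!: dvdE)
  qed
  finally show ?case .
qed

lemma lucas_cong:
  assumes "prime p"
  shows "[n choose x = (n div p choose x div p) * (n mod p choose x mod p)] (mod p)"
proof -
  define q r where "q = n div p" and "r = n mod p"
  define f where "f k = (if p dvd k then q choose (k div p) else 0) * (r choose (x - k))" for k
  have p0: "p > 0" using assms prime_gt_0_nat by blast
  have n: "n = p * q + r" and r: "r < p" using p0 by (simp_all add: q_def r_def)
  have "n choose x = (\<Sum>k\<le>x. ((p * q) choose k) * (r choose (x - k)))"
    using vandermonde[of "p * q" r x] n by simp
  also have "[\<dots> = (\<Sum>k\<le>x. f k)] (mod p)"
    unfolding f_def using choose_mult_prime_cong[OF assms] by (intro cong_sum cong_mult) auto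
  also have "(\<Sum>k\<le>x. f k) = (\<Sum>k\<in>{p * (x div p)}. f k)"
  proof (rule sum.mono_neutral_right)
    show "\<forall>k\<in>{..x} - {p * (x div p)}. f k = 0"
    proof
      fix k assume k: "k \<in> {..x} - {p * (x div p)}"
      show "f k = 0"
      proof (cases "p dvd k")
        case True
        then obtain t where t: "k = p * t" by auto
        have "t \<le> x div p" using k t p0 by (simp add: less_eq_div_iff_mult_less_eq mult.commute)
        with k t have "t < x div p" by auto
        then have "p * Suc t \<le> p * (x div p)" by (intro mult_le_mono2) simp
        moreover have "p * (x div p) \<le> x" by (rule times_div_less_eq_dividend)
        ultimately have "p * t + p \<le> x" by (metis add.commute le_trans mult_Suc_right)
        then have "r < x - k" using r t by linarith
        then show ?thesis by (simp add: f_def)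
      qed (simp add: f_def)
    qed
  qed auto
  also have "\<dots> = (q choose (x div p)) * (r choose (x mod p))"
    using p0 by (simp add: f_def minus_div_mult_eq_mod[of x p, symmetric] mult.commute)
  finally show ?thesis unfolding q_def r_def .
qed

lemma prime_dvd_choose_of_mod_less:
  assumes "prime p" "n mod p < x mod p"
  shows "p dvd (n choose x)"
  using lucas_cong[OF assms(1), of n x] assms(2) by (simp add: cong_0_iff binomial_eq_0)

lemma prime_dvd_choose_of_dvd_div:
  assumes "prime p" "p dvd (n div p choose x div p)"
  shows "p dvd (n choose x)"
  using lucas_cong[OF assms(1), of n x] assms(2) by (simp add: cong_0_iff cong_dvd_iff)

lemma digits_sum_Suc:
  fixes d :: "nat \<Rightarrow> nat"
  shows "(\<Sum>j\<le>Suc K. d j * p ^ j) = d 0 + p * (\<Sum>j\<le>K. d (Suc j) * p ^ j)"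
  by (simp add: sum.atMost_Suc_shift sum_distrib_left ac_simps del: sum.atMost_Suc)

lemma digits_sum_mod:
  fixes d :: "nat \<Rightarrow> nat"
  assumes "d 0 < p"
  shows "(\<Sum>j\<le>k. d j * p ^ j) mod p = d 0"
  using assms by (cases k) (simp_all add: digits_sum_Suc del: sum.atMost_Suc)

lemma digits_sum_div:
  fixes d :: "nat \<Rightarrow> nat"
  assumes "d 0 < p"
  shows "(\<Sum>j\<le>Suc K. d j * p ^ j) div p = (\<Sum>j\<le>K. d (Suc j) * p ^ j)"
  using assms by (simp add: digits_sum_Suc del: sum.atMost_Suc)

lemma not_dvd_choose_subset_atMost: "{x. \<not> (p::nat) dvd (m choose x)} \<subseteq> {..m}"
  by (metis (mono_tags) atMost_iff binomial_eq_0 dvd_0_right mem_Collect_eq not_le subsetI)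

lemma card_not_dvd_choose_le:
  assumes "prime p" "\<And>j. j \<le> k \<Longrightarrow> d j < p"
  shows "card {x. \<not> p dvd ((\<Sum>j\<le>k. d j * p ^ j) choose x)} \<le> (\<Prod>j\<le>k. d j + 1)"
  using assms(2)
proof (induction k arbitrary: d)
  case 0
  show ?case using card_mono[OF _ not_dvd_choose_subset_atMost] by simp
next
  case (Suc K)
  define n n' where "n = (\<Sum>j\<le>Suc K. d j * p ^ j)" and "n' = (\<Sum>j\<le>K. d (Suc j) * p ^ j)"
  define L where "L m = {x. \<not> p dvd (m choose x)}" for m
  have d0: "d 0 < p" using Suc.prems by auto
  have n: "n mod p = d 0" "n div p = n'"
    unfolding n_def n'_def using d0 by (simp_all add: digits_sum_mod digits_sum_div del: sum.atMost_Suc)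
  have IH: "card (L n') \<le> (\<Prod>j\<le>K. d (Suc j) + 1)"
    unfolding n'_def L_def using Suc.IH[of "\<lambda>j. d (Suc j)"] Suc.prems by auto
  have fin: "finite (L n')"
    unfolding L_def using not_dvd_choose_subset_atMost finite_subset by blast
  have "inj_on (\<lambda>x. (x mod p, x div p)) (L n)"
    by (intro inj_onI) (metis div_mult_mod_eq prod.inject)
  then have "card (L n) = card ((\<lambda>x. (x mod p, x div p)) ` L n)"
    by (simp add: card_image)
  also have "\<dots> \<le> card ({..d 0} \<times> L n')"
  proof (intro card_mono image_subsetI)
    show "finite ({..d 0} \<times> L n')" using fin by simp
    fix x assume "x \<in> L n"
    then show "(x mod p, x div p) \<in> {..d 0} \<times> L n'"
      using prime_dvd_choose_of_mod_less[OF assms(1), of n x]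
        prime_dvd_choose_of_dvd_div[OF assms(1), of n x]
      by (auto simp: L_def n not_le[symmetric])
  qed
  also have "\<dots> \<le> (d 0 + 1) * (\<Prod>j\<le>K. d (Suc j) + 1)"
    using IH by (simp add: card_cartesian_product del: mult_Suc)
  also have "\<dots> = (\<Prod>j\<le>Suc K. d j + 1)"
    by (simp add: prod.atMost_Suc_shift del: prod.atMost_Suc)
  finally show ?case unfolding n_def L_def .
qed

definition dvd_choose_positions :: "nat \<Rightarrow> nat \<Rightarrow> nat set" where
  "dvd_choose_positions p n = {x \<in> {2..<n}. p dvd (n choose x)}"

lemma dvd_choose_positions_subset: "dvd_choose_positions p n \<subseteq> {2..<n}"
  by (auto simp: dvd_choose_positions_def)

lemma card_dvd_choose_positions:
  assumes "2 \<le> n" "p \<noteq> 1"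
  shows "card (dvd_choose_positions p n) + card {x. \<not> p dvd (n choose x)} = n + of_bool (\<not> p dvd n)"
proof -
  define L D where "L = {x. \<not> p dvd (n choose x)}" and "D = {x \<in> {1::nat}. p dvd n}"
  have partition: "{..n} = L \<union> dvd_choose_positions p n \<union> D"
  proof (intro equalityI subsetI)
    fix x assume x: "x \<in> {..n}"
    show "x \<in> L \<union> dvd_choose_positions p n \<union> D"
    proof (cases "p dvd (n choose x)")
      case True
      moreover have "\<not> p dvd 1" using assms(2) by simp
      ultimately have "x \<noteq> 0" "x \<noteq> n" by (metis binomial_n_0, metis binomial_n_n)
      then consider "x = 1" | "2 \<le> x" "x < n" using x by fastforce
      then show ?thesis using True by cases (auto simp: D_def dvd_choose_positions_def)
    qed (simp add: L_def)
  next
    fix x assume "x \<in> L \<union> dvd_choose_positions p n \<union> D"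
    then show "x \<in> {..n}"
      using not_dvd_choose_subset_atMost assms(1) by (auto simp: L_def D_def dvd_choose_positions_def)
  qed
  have "n + 1 = card (L \<union> dvd_choose_positions p n \<union> D)"
    unfolding partition[symmetric] by simp
  also have "\<dots> = card L + card (dvd_choose_positions p n) + card D"
  proof -
    have "finite L" using not_dvd_choose_subset_atMost finite_subset unfolding L_def by blast
    moreover have "finite (dvd_choose_positions p n)" "finite D"
      by (simp_all add: dvd_choose_positions_def D_def)
    moreover have "L \<inter> dvd_choose_positions p n = {}" "(L \<union> dvd_choose_positions p n) \<inter> D = {}"
      by (auto simp: L_def D_def dvd_choose_positions_def)
    ultimately show ?thesis by (simp add: card_Un_disjoint)
  qed
  moreover have "card D = of_bool (p dvd n)" by (cases "p dvd n") (simp_all add: D_def)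
  ultimately show ?thesis by (cases "p dvd n") (simp_all add: L_def)
qed

lemma card_dvd_choose_positions_ge:
  assumes "prime p" "\<And>j. j \<le> k \<Longrightarrow> d j < p" "n = (\<Sum>j\<le>k. d j * p ^ j)" "2 \<le> n"
  shows "n + of_bool (0 < d 0) \<le> card (dvd_choose_positions p n) + (\<Prod>j\<le>k. d j + 1)"
proof -
  have "n mod p = d 0" using digits_sum_mod[of d p k] assms(2,3) by simp
  then have "\<not> p dvd n \<longleftrightarrow> 0 < d 0" by (simp add: dvd_eq_mod_eq_0)
  moreover have "card (dvd_choose_positions p n) + card {x. \<not> p dvd (n choose x)}
      = n + of_bool (\<not> p dvd n)"
    using assms(1,4) by (intro card_dvd_choose_positions) auto
  moreover have "card {x. \<not> p dvd (n choose x)} \<le> (\<Prod>j\<le>k. d j + 1)"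
    unfolding assms(3) by (rule card_not_dvd_choose_le[OF assms(1)]) (rule assms(2))
  ultimately show ?thesis by simp
qed

lemma pred_in_dvd_choose_positions:
  assumes "prime p" "3 \<le> p" "p \<le> n" "n mod p < p - 1"
  shows "p - 1 \<in> dvd_choose_positions p n"
proof -
  have "2 \<le> p - 1" "p - 1 < n" using assms(2,3) by auto
  then show ?thesis
    using prime_dvd_choose_of_mod_less[OF assms(1), of n "p - 1"] assms(2,4)
    by (simp add: dvd_choose_positions_def)
qed

lemma dvd_choose_positions_div:
  assumes "prime p" "y \<in> dvd_choose_positions p (n div p)"
  shows "p * y + n mod p \<in> dvd_choose_positions p n"
proof -
  define x where "x = p * y + n mod p"
  have p0: "p > 0" using assms(1) prime_gt_0_nat by blast
  have y: "2 \<le> y" "y < n div p" "p dvd (n div p choose y)"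
    using assms(2) by (auto simp: dvd_choose_positions_def)
  have "x mod p = n mod p" "x div p = y" using p0 by (simp_all add: x_def)
  then have "p dvd (n choose x)" using prime_dvd_choose_of_dvd_div[OF assms(1), of n x] y(3) by simp
  moreover have "y \<le> p * y" using p0 by simp
  then have "2 \<le> x" using y(1) unfolding x_def by linarith
  moreover have "x < n"
  proof -
    have "x < p * Suc y" using p0 by (simp add: x_def)
    moreover have "p * Suc y \<le> p * (n div p)" using y(2) by (intro mult_le_mono2) simp
    moreover have "p * (n div p) \<le> n" by (rule times_div_less_eq_dividend)
    ultimately show ?thesis by linarith
  qed
  ultimately show ?thesis by (simp add: dvd_choose_positions_def x_def)
qed

lemma dvd_choose_positions_ne_empty:
  assumes "prime p" "odd p" "\<And>j. j \<le> k \<Longrightarrow> d j < p" "d k > 0" "\<exists>j<k. d j \<noteq> p - 1"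
  shows "dvd_choose_positions p (\<Sum>j\<le>k. d j * p ^ j) \<noteq> {}"
  using assms(3-5)
proof (induction k arbitrary: d)
  case (Suc K)
  define n where "n = (\<Sum>j\<le>Suc K. d j * p ^ j)"
  have p3: "p \<ge> 3" using assms(1,2) prime_ge_2_nat[OF assms(1)] by (cases "p = 2") auto
  have d0: "d 0 < p" using Suc.prems by auto
  have n: "n mod p = d 0" "n div p = (\<Sum>j\<le>K. d (Suc j) * p ^ j)"
    unfolding n_def using d0 by (simp_all add: digits_sum_mod digits_sum_div del: sum.atMost_Suc)
  show ?case
  proof (cases "d 0 = p - 1")
    case False
    have "p \<le> p ^ Suc K" using p3 by simp
    also have "\<dots> \<le> d (Suc K) * p ^ Suc K" using Suc.prems(2) by simp
    also have "\<dots> \<le> n" unfolding n_def by (rule member_le_sum) auto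
    finally have "p - 1 \<in> dvd_choose_positions p n"
      using pred_in_dvd_choose_positions[OF assms(1) p3] False d0 n(1) by simp
    then show ?thesis unfolding n_def by blast
  next
    case True
    obtain j where "j < Suc K" "d j \<noteq> p - 1" using Suc.prems(3) by blast
    with True obtain j' where "j' < K" "d (Suc j') \<noteq> p - 1" by (cases j) auto
    then have "dvd_choose_positions p (n div p) \<noteq> {}"
      using Suc.IH[of "\<lambda>j. d (Suc j)"] Suc.prems n(2) by auto
    then show ?thesis
      using dvd_choose_positions_div[OF assms(1), of _ n] unfolding n_def by blast
  qed
qed simp

lemma digits_sum_all_max:
  fixes d :: "nat \<Rightarrow> nat"
  assumes "p > 0" "\<forall>j<k. d j = p - 1"
  shows "(\<Sum>j\<le>k. d j * p ^ j) + 1 = (\<Prod>j\<le>k. d j + 1)"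
proof -
  have "(\<Sum>j<k. d j * p ^ j) + 1 = p ^ k \<and> (\<Prod>j<k. d j + 1) = p ^ k"
    using assms(2)
  proof (induction k)
    case (Suc k)
    then have "(\<Sum>j<k. d j * p ^ j) + 1 = p ^ k" "(\<Prod>j<k. d j + 1) = p ^ k" "d k = p - 1"
      by auto
    moreover have "p ^ k + (p - 1) * p ^ k = p ^ Suc k" using assms(1) by (cases p) auto
    ultimately show ?case by (simp add: mult.commute)
  qed simp
  then show ?thesis by (simp add: lessThan_Suc_atMost[symmetric] algebra_simps)
qed

section \<open>Pseudo-compositions and descent sets\<close>

lemma desc_comp_singleton [simp]: "desc_comp [a] = {}"
  by (simp add: desc_comp_def)

lemma desc_comp_Cons:
  assumes "\<beta> \<noteq> []"
  shows "desc_comp (a # \<beta>) = (+) a ` insert 0 (desc_comp \<beta>)"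
proof -
  have "desc_comp (a # \<beta>) = {sum_list (take j (a # \<beta>)) | j. 1 \<le> j \<and> j \<le> length \<beta>}"
    by (simp add: desc_comp_def)
  also have "\<dots> = (\<lambda>j. a + sum_list (take j \<beta>)) ` {..length \<beta> - 1}"
  proof (intro set_eqI iffI)
    fix y assume "y \<in> {sum_list (take j (a # \<beta>)) | j. 1 \<le> j \<and> j \<le> length \<beta>}"
    then obtain j where j: "1 \<le> j" "j \<le> length \<beta>" "y = sum_list (take j (a # \<beta>))" by auto
    then obtain j' where "j = Suc j'" by (cases j) auto
    then show "y \<in> (\<lambda>j. a + sum_list (take j \<beta>)) ` {..length \<beta> - 1}" using j by auto
  next
    fix y assume "y \<in> (\<lambda>j. a + sum_list (take j \<beta>)) ` {..length \<beta> - 1}"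
    then obtain j where j: "j \<le> length \<beta> - 1" "y = a + sum_list (take j \<beta>)" by auto
    then have "y = sum_list (take (Suc j) (a # \<beta>))" "1 \<le> Suc j" "Suc j \<le> length \<beta>"
      using assms by (auto simp: Suc_le_eq) (cases \<beta>; auto)
    then show "y \<in> {sum_list (take j (a # \<beta>)) | j. 1 \<le> j \<and> j \<le> length \<beta>}" by blast
  qed
  also have "\<dots> = (+) a ` ((\<lambda>j. sum_list (take j \<beta>)) ` {..length \<beta> - 1})"
    by (simp add: image_image)
  also have "(\<lambda>j. sum_list (take j \<beta>)) ` {..length \<beta> - 1} = insert 0 (desc_comp \<beta>)"
  proof (intro set_eqI iffI)
    fix y assume "y \<in> (\<lambda>j. sum_list (take j \<beta>)) ` {..length \<beta> - 1}"
    then obtain j where j: "j \<le> length \<beta> - 1" "y = sum_list (take j \<beta>)" by auto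
    then show "y \<in> insert 0 (desc_comp \<beta>)"
      by (cases "j = 0") (auto simp: desc_comp_def)
  next
    fix y assume "y \<in> insert 0 (desc_comp \<beta>)"
    then show "y \<in> (\<lambda>j. sum_list (take j \<beta>)) ` {..length \<beta> - 1}"
      by (auto simp: desc_comp_def intro: image_eqI[where x=0])
  qed
  finally show ?thesis .
qed

lemma in_desc_comp_Cons: "\<beta> \<noteq> [] \<Longrightarrow> a \<in> desc_comp (a # \<beta>)"
  by (simp add: desc_comp_Cons)

lemma desc_comp_Cons_ge: "\<beta> \<noteq> [] \<Longrightarrow> s \<in> desc_comp (a # \<beta>) \<Longrightarrow> a \<le> s"
  by (auto simp: desc_comp_Cons)

lemma desc_comp_Cons_eq_empty_iff: "desc_comp (a # \<beta>) = {} \<longleftrightarrow> \<beta> = []"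
  using in_desc_comp_Cons by fastforce

lemma zero_notin_desc_comp:
  assumes "\<beta> \<noteq> []" "hd \<beta> > 0"
  shows "0 \<notin> desc_comp \<beta>"
proof
  assume zero: "0 \<in> desc_comp \<beta>"
  obtain b bs where \<beta>: "\<beta> = b # bs" using assms(1) by (cases \<beta>) auto
  then have "bs \<noteq> []" using zero by (auto simp: desc_comp_def)
  then show False using desc_comp_Cons_ge[of bs 0 b] zero assms(2) by (simp add: \<beta>)
qed

lemma hd_in_desc_comp:
  assumes "length \<beta> \<ge> 2"
  shows "hd \<beta> \<in> desc_comp \<beta>"
proof -
  obtain b bs where b: "\<beta> = b # bs" using assms by (cases \<beta>) auto
  have "sum_list (take 1 \<beta>) = hd \<beta>" using b by simp
  then show ?thesis unfolding desc_comp_def using assms by force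
qed

lemma pseudo_comp_Cons_iff:
  "pseudo_comp n (a # \<beta>) \<longleftrightarrow> (\<beta> = [] \<and> a = n) \<or>
     (\<beta> \<noteq> [] \<and> hd \<beta> > 0 \<and> pseudo_comp (n - a) \<beta> \<and> a \<le> n)"
proof
  assume pc: "pseudo_comp n (a # \<beta>)"
  show "(\<beta> = [] \<and> a = n) \<or> (\<beta> \<noteq> [] \<and> hd \<beta> > 0 \<and> pseudo_comp (n - a) \<beta> \<and> a \<le> n)"
  proof (cases "\<beta> = []")
    case True then show ?thesis using pc by (simp add: pseudo_comp_def)
  next
    case False
    have pos: "\<forall>j\<in>{1..<length (a # \<beta>)}. (a # \<beta>) ! j > 0" and s: "sum_list (a # \<beta>) = n"
      using pc by (auto simp: pseudo_comp_def)
    have "\<beta> ! j > 0" if "j < length \<beta>" for j using pos that by (auto dest: bspec[of _ _ "Suc j"])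
    then have "hd \<beta> > 0" "\<forall>j\<in>{1..<length \<beta>}. \<beta> ! j > 0" using False by (auto simp: hd_conv_nth)
    then show ?thesis using False s by (auto simp: pseudo_comp_def)
  qed
next
  assume h: "(\<beta> = [] \<and> a = n) \<or> (\<beta> \<noteq> [] \<and> hd \<beta> > 0 \<and> pseudo_comp (n - a) \<beta> \<and> a \<le> n)"
  show "pseudo_comp n (a # \<beta>)"
  proof (cases "\<beta> = []")
    case True then show ?thesis using h by (simp add: pseudo_comp_def)
  next
    case False
    then have hb: "hd \<beta> > 0" "pseudo_comp (n - a) \<beta>" "a \<le> n" using h by auto
    have "\<beta> ! j > 0" if "j < length \<beta>" for j
    proof (cases j)
      case 0 then show ?thesis using hb False by (simp add: hd_conv_nth)
    next
      case (Suc j') then show ?thesis using hb that by (auto simp: pseudo_comp_def)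
    qed
    then have "\<forall>j\<in>{1..<length (a # \<beta>)}. (a # \<beta>) ! j > 0"
      by (auto simp: nth_Cons split: nat.splits)
    then show ?thesis using hb by (auto simp: pseudo_comp_def)
  qed
qed

lemma desc_comp_inj:
  assumes "pseudo_comp n \<alpha>" "pseudo_comp n \<alpha>'" "desc_comp \<alpha> = desc_comp \<alpha>'"
  shows "\<alpha> = \<alpha>'"
  using assms
proof (induction \<alpha> arbitrary: n \<alpha>')
  case Nil
  then show ?case by (simp add: pseudo_comp_def)
next
  case (Cons a \<beta>)
  obtain a' \<beta>' where \<alpha>': "\<alpha>' = a' # \<beta>'"
    using Cons.prems(2) by (cases \<alpha>') (auto simp: pseudo_comp_def)
  have empty_iff: "\<beta> = [] \<longleftrightarrow> \<beta>' = []"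
    using Cons.prems(3) desc_comp_Cons_eq_empty_iff unfolding \<alpha>' by metis
  show ?case
  proof (cases "\<beta> = []")
    case True
    then show ?thesis using empty_iff \<alpha>' Cons.prems(1,2) by (simp add: pseudo_comp_Cons_iff)
  next
    case False
    then have "\<beta>' \<noteq> []" using empty_iff by simp
    have "a = a'"
      using in_desc_comp_Cons desc_comp_Cons_ge False \<open>\<beta>' \<noteq> []\<close> Cons.prems(3) \<alpha>'
      by (metis antisym)
    have \<beta>: "hd \<beta> > 0" "pseudo_comp (n - a) \<beta>"
      using Cons.prems(1) False by (auto simp: pseudo_comp_Cons_iff)
    have \<beta>': "hd \<beta>' > 0" "pseudo_comp (n - a) \<beta>'"
      using Cons.prems(2) \<open>\<beta>' \<noteq> []\<close> \<alpha>' \<open>a = a'\<close> by (auto simp: pseudo_comp_Cons_iff)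
    have "(+) a ` insert 0 (desc_comp \<beta>) = (+) a ` insert 0 (desc_comp \<beta>')"
      using Cons.prems(3) \<alpha>' \<open>a = a'\<close> desc_comp_Cons[OF False] desc_comp_Cons[OF \<open>\<beta>' \<noteq> []\<close>]
      by simp
    then have "insert 0 (desc_comp \<beta>) = insert 0 (desc_comp \<beta>')"
      by (rule inj_image_eq_iff[THEN iffD1, rotated]) simp
    then have "desc_comp \<beta> = desc_comp \<beta>'"
      using zero_notin_desc_comp[OF False \<beta>(1)] zero_notin_desc_comp[OF \<open>\<beta>' \<noteq> []\<close> \<beta>'(1)]
      by (metis insert_ident)
    then show ?thesis using Cons.IH[OF \<beta>(2) \<beta>'(2)] \<alpha>' \<open>a = a'\<close> by simp
  qed
qed

lemma desc_comp_subset: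
  assumes "pseudo_comp n \<alpha>" shows "desc_comp \<alpha> \<subseteq> {0..<n}"
  using assms
proof (induction \<alpha> arbitrary: n)
  case Nil then show ?case by (simp add: pseudo_comp_def)
next
  case (Cons a \<beta>)
  show ?case
  proof (cases "\<beta> = []")
    case True then show ?thesis by simp
  next
    case False
    have pb: "hd \<beta> > 0" "pseudo_comp (n - a) \<beta>" "a \<le> n" using Cons.prems False by (auto simp: pseudo_comp_Cons_iff)
    have IH: "desc_comp \<beta> \<subseteq> {0..<n - a}" using Cons.IH pb(2) .
    have "n - a > 0"
    proof -
      have "sum_list \<beta> \<ge> hd \<beta>" using False by (cases \<beta>) auto
      then show ?thesis using pb by (auto simp: pseudo_comp_def)
    qed
    then show ?thesis using IH desc_comp_Cons[OF False, of a] pb by auto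
  qed
qed

lemma hd_pos_if_zero_notin_desc_comp:
  assumes "pseudo_comp m \<beta>" "0 < m" "0 \<notin> desc_comp \<beta>"
  shows "hd \<beta> > 0"
proof (cases "length \<beta> \<ge> 2")
  case True
  then show ?thesis using hd_in_desc_comp[OF True] assms(3) by (cases "hd \<beta>") auto
next
  case False
  obtain b bs where \<beta>: "\<beta> = b # bs" using assms(1) by (cases \<beta>) (auto simp: pseudo_comp_def)
  then have "bs = []" using False by (cases bs) auto
  then show ?thesis using assms(1,2) \<beta> by (simp add: pseudo_comp_def)
qed

lemma desc_comp_surj:
  assumes "S \<subseteq> {0..<n}"
  shows "\<exists>\<alpha>. pseudo_comp n \<alpha> \<and> desc_comp \<alpha> = S"
  using assms
proof (induction "card S" arbitrary: S n rule: less_induct)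
  case less
  show ?case
  proof (cases "S = {}")
    case True
    then show ?thesis by (intro exI[of _ "[n]"]) (simp add: pseudo_comp_def)
  next
    case False
    have finS: "finite S" using less.prems finite_subset by blast
    define a where "a = Min S"
    have aS: "a \<in> S" using Min_in[OF finS False] a_def by simp
    have amin: "\<And>s. s \<in> S \<Longrightarrow> a \<le> s" using Min_le[OF finS] a_def by simp
    have an: "a < n" using aS less.prems by auto
    define S' where "S' = (\<lambda>s. s - a) ` (S - {a})"
    have S'sub: "S' \<subseteq> {0..<n - a}" using less.prems amin unfolding S'_def by force
    have S'pos: "0 \<notin> S'" using amin unfolding S'_def by force
    have "card S' \<le> card (S - {a})" unfolding S'_def using finS by (intro card_image_le) auto
    also have "\<dots> < card S" by (rule card_Diff1_less[OF finS aS])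
    finally obtain \<beta> where \<beta>: "pseudo_comp (n - a) \<beta>" "desc_comp \<beta> = S'"
      using less.hyps S'sub by blast
    have bne: "\<beta> \<noteq> []" using \<beta> by (simp add: pseudo_comp_def)
    have hdpos: "hd \<beta> > 0"
      using hd_pos_if_zero_notin_desc_comp \<beta> S'pos an by simp
    have pc: "pseudo_comp n (a # \<beta>)" using bne hdpos \<beta>(1) an by (simp add: pseudo_comp_Cons_iff)
    have "desc_comp (a # \<beta>) = (+) a ` insert 0 S'" using desc_comp_Cons[OF bne] \<beta>(2) by simp
    also have "\<dots> = S"
    proof -
      have "(+) a ` S' = (\<lambda>s. a + (s - a)) ` (S - {a})" unfolding S'_def image_image ..
      also have "\<dots> = (\<lambda>s. s) ` (S - {a})" using amin by (intro image_cong) auto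
      finally have "(+) a ` S' = S - {a}" by simp
      then show ?thesis using aS by auto
    qed
    finally show ?thesis using pc by blast
  qed
qed

lemma bij_betw_desc_comp: "bij_betw desc_comp {\<alpha>. pseudo_comp n \<alpha>} (Pow {0..<n})"
proof (rule bij_betw_imageI)
  show "inj_on desc_comp {\<alpha>. pseudo_comp n \<alpha>}" using desc_comp_inj by (auto intro: inj_onI)
  show "desc_comp ` {\<alpha>. pseudo_comp n \<alpha>} = Pow {0..<n}"
    using desc_comp_subset desc_comp_surj by (auto simp: image_iff) metis
qed

section \<open>Signed permutations\<close>

lemma uminus_in_signed_set_iff [simp]: "- i \<in> signed_set n \<longleftrightarrow> i \<in> signed_set n"
  by (auto simp: signed_set_def)

lemma finite_signed_set [simp]: "finite (signed_set n)"
  by (rule finite_subset[of _ "{- int n..int n}"]) (auto simp: signed_set_def)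

lemma signed_perms_bij_betw: "w \<in> signed_perms n \<Longrightarrow> bij_betw w (signed_set n) (signed_set n)"
  by (simp add: signed_perms_def)

lemma signed_perms_in_signed_set:
  "w \<in> signed_perms n \<Longrightarrow> i \<in> signed_set n \<Longrightarrow> w i \<in> signed_set n"
  by (auto simp: signed_perms_def bij_betw_def)

lemma signed_perms_fixes: "w \<in> signed_perms n \<Longrightarrow> i \<notin> signed_set n \<Longrightarrow> w i = i"
  by (simp add: signed_perms_def)

lemma signed_perms_uminus: "w \<in> signed_perms n \<Longrightarrow> w (- i) = - w i"
  by (cases "i \<in> signed_set n") (auto simp: signed_perms_def)

lemma signed_perms_abs_eqD:
  assumes w: "w \<in> signed_perms n" and "i \<in> signed_set n" "j \<in> signed_set n"
    and "\<bar>w i\<bar> = \<bar>w j\<bar>"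
  shows "\<bar>i\<bar> = \<bar>j\<bar>"
proof -
  have "w i = w j \<or> w i = w (- j)"
    using assms(4) signed_perms_uminus[OF w, of j] by (auto simp: abs_if split: if_splits)
  then have "i = j \<or> i = - j"
    using signed_perms_bij_betw[OF w] assms(2,3) by (auto simp: bij_betw_def dest: inj_onD)
  then show ?thesis by auto
qed

lemma signed_perms_comp:
  assumes "f \<in> signed_perms n" "w \<in> signed_perms n"
  shows "f \<circ> w \<in> signed_perms n"
  using bij_betw_trans[OF signed_perms_bij_betw[OF assms(2)] signed_perms_bij_betw[OF assms(1)]]
    signed_perms_uminus[OF assms(1)] signed_perms_uminus[OF assms(2)]
    signed_perms_fixes[OF assms(1)] signed_perms_fixes[OF assms(2)]
  by (simp add: signed_perms_def)

lemma finite_signed_perms: "finite (signed_perms n)"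
proof -
  have "inj_on (\<lambda>w. restrict w (signed_set n)) (signed_perms n)"
    by (intro inj_onI ext) (metis restrict_apply' signed_perms_fixes)
  moreover have "(\<lambda>w. restrict w (signed_set n)) ` signed_perms n \<subseteq> signed_set n \<rightarrow>\<^sub>E signed_set n"
    using signed_perms_in_signed_set by auto
  ultimately show ?thesis by (metis finite_PiE finite_imageD finite_signed_set finite_subset)
qed

lemma finite_even_signed_perms: "finite (even_signed_perms n)"
  using finite_signed_perms by (rule finite_subset[rotated]) (auto simp: even_signed_perms_def)

lemma bij_betw_abs_signed_perms:
  assumes w: "w \<in> signed_perms n"
  shows "bij_betw (\<lambda>i. \<bar>w i\<bar>) {1..int n} {1..int n}"
proof -
  have "inj_on (\<lambda>i. \<bar>w i\<bar>) {1..int n}"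
    using signed_perms_abs_eqD[OF w] by (intro inj_onI) (force simp: signed_set_def)
  moreover have "(\<lambda>i. \<bar>w i\<bar>) ` {1..int n} \<subseteq> {1..int n}"
    using signed_perms_in_signed_set[OF w] by (force simp: signed_set_def)
  ultimately show ?thesis by (simp add: bij_betw_def endo_inj_surj)
qed

lemma wD_in_signed_set:
  assumes "w \<in> signed_perms n" "2 \<le> n" "i \<le> n"
  shows "wD w i \<in> signed_set n"
  using assms signed_perms_in_signed_set[OF assms(1), of 2] signed_perms_in_signed_set[OF assms(1), of "int i"]
  by (auto simp: wD_def signed_set_def)

lemma wD_abs_neq:
  assumes w: "w \<in> signed_perms n" and "2 \<le> n" "i < n"
  shows "\<bar>wD w i\<bar> \<noteq> \<bar>wD w (i + 1)\<bar>"
proof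
  assume eq: "\<bar>wD w i\<bar> = \<bar>wD w (i + 1)\<bar>"
  show False
  proof (cases "i = 0")
    case True
    then show False using eq signed_perms_abs_eqD[OF w, of 2 1] assms by (simp add: wD_def signed_set_def)
  next
    case False
    then show False
      using eq signed_perms_abs_eqD[OF w, of "int i" "int i + 1"] assms
      by (simp add: wD_def signed_set_def add.commute)
  qed
qed

text \<open>Oddness of \<open>f\<close> is needed because position \<open>0\<close> reads \<open>- w 2\<close>.\<close>

lemma descD_comp:
  assumes "\<And>v. f (- v) = - f v"
  shows "descD n (f \<circ> w) = {i \<in> {0..<n}. f (wD w i) > f (wD w (i + 1))}"
  using assms by (simp add: descD_def wD_def)

lemma prod_sgn_eq_power:
  fixes f :: "'a \<Rightarrow> int"
  assumes "finite A" "\<And>i. i \<in> A \<Longrightarrow> f i \<noteq> 0"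
  shows "(\<Prod>i\<in>A. sgn (f i)) = (-1) ^ card {i \<in> A. f i < 0}"
proof -
  have "(\<Prod>i\<in>A. sgn (f i)) = (\<Prod>i\<in>A. if f i < 0 then -1 else 1)"
    using assms(2) by (intro prod.cong) (auto simp: sgn_if)
  also have "\<dots> = (\<Prod>i\<in>{i \<in> A. f i < 0}. -1)"
    by (rule prod.inter_filter[symmetric, OF assms(1)])
  finally show ?thesis by simp
qed

lemma even_signed_perms_iff_prod_sgn:
  assumes "w \<in> signed_perms n"
  shows "w \<in> even_signed_perms n \<longleftrightarrow> (\<Prod>i\<in>{1..int n}. sgn (w i)) = 1"
proof -
  have "w i \<noteq> 0" if "i \<in> {1..int n}" for i
    using signed_perms_in_signed_set[OF assms, of i] that by (auto simp: signed_set_def)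
  then have "(\<Prod>i\<in>{1..int n}. sgn (w i)) = (-1) ^ card {i \<in> {1..int n}. w i < 0}"
    by (intro prod_sgn_eq_power) auto
  then show ?thesis
    using assms unfolding even_signed_perms_def by (simp add: minus_one_power_iff)
qed

lemma nat_abs_in_signed_set: "v \<in> signed_set n \<Longrightarrow> nat \<bar>v\<bar> \<in> {1..n}"
  by (auto simp: signed_set_def)

lemma even_signed_perms_signed_perms: "w \<in> even_signed_perms n \<Longrightarrow> w \<in> signed_perms n"
  by (simp add: even_signed_perms_def)

section \<open>Counting by descent sets\<close>

text \<open>Stanley's \<open>\<beta>\<^sub>n(S)\<close> and \<open>\<alpha>\<^sub>n(T)\<close> for type D descents; the paper's \<open>r\<^sup>D\<^sub>\<alpha>\<close> is
  \<open>betaD n (desc_comp \<alpha>)\<close>.\<close>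

definition betaD :: "nat \<Rightarrow> nat set \<Rightarrow> nat" where
  "betaD n S = card {w \<in> even_signed_perms n. descD n w = S}"

definition alphaD :: "nat \<Rightarrow> nat set \<Rightarrow> nat" where
  "alphaD n T = card {w \<in> even_signed_perms n. descD n w \<subseteq> T}"

lemma alphaD_eq_sum_betaD:
  assumes "finite T"
  shows "alphaD n T = (\<Sum>S\<in>Pow T. betaD n S)"
proof -
  have "{w \<in> even_signed_perms n. descD n w \<subseteq> T}
      = (\<Union>S\<in>Pow T. {w \<in> even_signed_perms n. descD n w = S})"
    by auto
  then show ?thesis
    unfolding alphaD_def betaD_def
    by (simp, intro card_UN_disjoint) (use assms finite_even_signed_perms in auto)
qed

text \<open>Composing with \<open>reflect n\<close> reverses every comparison between values of distinct
  absolute value, hence complements descent sets; for odd \<open>n\<close> the values \<open>\<plusminus>1\<close> are kept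
  so that an even number of signs changes.\<close>

definition reflect :: "nat \<Rightarrow> int \<Rightarrow> int" where
  "reflect n v = (if v \<in> signed_set n \<and> (2 \<le> \<bar>v\<bar> \<or> even n) then - v else v)"

lemma reflect_reflect [simp]: "reflect n (reflect n v) = v"
  by (auto simp: reflect_def)

lemma reflect_uminus: "reflect n (- v) = - reflect n v"
  by (auto simp: reflect_def)

lemma reflect_signed_perms: "reflect n \<in> signed_perms n"
  unfolding signed_perms_def
  by (auto simp: reflect_def intro!: bij_betw_byWitness[where f' = "reflect n"])

lemma reflect_less_iff:
  assumes "a \<in> signed_set n" "b \<in> signed_set n" "\<bar>a\<bar> \<noteq> \<bar>b\<bar>"
  shows "reflect n a < reflect n b \<longleftrightarrow> b < a"
  using assms by (auto simp: reflect_def signed_set_def)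

lemma reflect_comp_even_signed_perms:
  assumes w: "w \<in> even_signed_perms n"
  shows "reflect n \<circ> w \<in> even_signed_perms n"
proof -
  define t where "t a = (if 2 \<le> a \<or> even n then -1 else 1 :: int)" for a :: int
  have wsp: "w \<in> signed_perms n" using w by (rule even_signed_perms_signed_perms)
  have "sgn (reflect n (w i)) = sgn (w i) * t \<bar>w i\<bar>" if "i \<in> {1..int n}" for i
    using signed_perms_in_signed_set[OF wsp, of i] that
    by (auto simp: reflect_def t_def sgn_minus signed_set_def)
  then have "(\<Prod>i\<in>{1..int n}. sgn ((reflect n \<circ> w) i))
      = (\<Prod>i\<in>{1..int n}. sgn (w i)) * (\<Prod>i\<in>{1..int n}. t \<bar>w i\<bar>)"
    by (simp add: prod.distrib)
  also have "(\<Prod>i\<in>{1..int n}. t \<bar>w i\<bar>) = (\<Prod>a\<in>{1..int n}. t a)"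
    using prod.reindex_bij_betw[OF bij_betw_abs_signed_perms[OF wsp]] by simp
  also have "(\<Prod>a\<in>{1..int n}. t a) = 1"
  proof (cases "even n")
    case False
    then obtain m where n: "n = 2 * m + 1" using oddE by blast
    then have "{1..int n} = insert 1 {2..int n}" by auto
    then show ?thesis by (simp add: t_def n nat_mult_distrib)
  qed (simp add: t_def)
  finally show ?thesis
    using w signed_perms_comp[OF reflect_signed_perms wsp]
    by (simp add: even_signed_perms_iff_prod_sgn[OF wsp] even_signed_perms_iff_prod_sgn)
qed

lemma descD_reflect_comp:
  assumes w: "w \<in> signed_perms n" and n: "2 \<le> n"
  shows "descD n (reflect n \<circ> w) = {0..<n} - descD n w"
proof -
  have iff: "reflect n (wD w i) > reflect n (wD w (i + 1)) \<longleftrightarrow> \<not> wD w i > wD w (i + 1)"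
    if "i < n" for i
    using reflect_less_iff[OF wD_in_signed_set[OF w n, of "i + 1"] wD_in_signed_set[OF w n, of i]]
      wD_abs_neq[OF w n that] that by auto
  have "descD n (reflect n \<circ> w)
      = {i \<in> {0..<n}. reflect n (wD w i) > reflect n (wD w (i + 1))}"
    by (rule descD_comp) (rule reflect_uminus)
  also have "\<dots> = {0..<n} - descD n w"
    using iff by (auto simp: descD_def)
  finally show ?thesis .
qed

lemma betaD_complement:
  assumes "S \<subseteq> {0..<n}" "2 \<le> n"
  shows "betaD n ({0..<n} - S) = betaD n S"
proof -
  have reflect: "reflect n \<circ> w \<in> {w \<in> even_signed_perms n. descD n w = {0..<n} - T}"
    if "w \<in> {w \<in> even_signed_perms n. descD n w = T}" for T w
    using that reflect_comp_even_signed_perms[of w n]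
      descD_reflect_comp[OF even_signed_perms_signed_perms assms(2), of w] by auto
  have "bij_betw (\<lambda>w. reflect n \<circ> w) {w \<in> even_signed_perms n. descD n w = S}
          {w \<in> even_signed_perms n. descD n w = {0..<n} - S}"
    using reflect[of _ S] reflect[of _ "{0..<n} - S"] assms(1)
    by (intro bij_betw_byWitness[where f' = "\<lambda>w. reflect n \<circ> w"])
      (auto simp: fun_eq_iff double_diff)
  then show ?thesis unfolding betaD_def by (simp add: bij_betw_same_card)
qed

lemma obtain_strict_mono_bij_betw:
  fixes A B :: "'a::wellorder set"
  assumes "finite A" "finite B" "card A = card B"
  obtains h where "bij_betw h A B" "strict_mono_on A h"
proof -
  obtain eA where eA: "bij_betw eA {..<card A} A" "strict_mono_on {..<card A} eA"
    using ex_bij_betw_strict_mono_card[OF assms(1)] by blast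
  obtain eB where eB: "bij_betw eB {..<card A} B" "strict_mono_on {..<card A} eB"
    using ex_bij_betw_strict_mono_card[OF assms(2)] assms(3) by metis
  define iA where "iA = the_inv_into {..<card A} eA"
  have iA: "iA a \<in> {..<card A}" "eA (iA a) = a" if "a \<in> A" for a
    using that bij_betw_the_inv_into[OF eA(1)] f_the_inv_into_f_bij_betw[OF eA(1)]
    by (auto simp: iA_def bij_betw_def)
  have "strict_mono_on A (eB \<circ> iA)"
  proof (rule strict_mono_onI)
    fix a b assume "a \<in> A" "b \<in> A" "a < b"
    then have "iA a < iA b" using strict_mono_on_less[OF eA(2)] iA by metis
    then show "(eB \<circ> iA) a < (eB \<circ> iA) b"
      using strict_mono_onD[OF eB(2)] iA \<open>a \<in> A\<close> \<open>b \<in> A\<close> by simp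
  qed
  moreover have "bij_betw (eB \<circ> iA) A B"
    unfolding iA_def by (rule bij_betw_trans[OF bij_betw_the_inv_into[OF eA(1)] eB(1)])
  ultimately show ?thesis using that by blast
qed

definition desc_class :: "nat \<Rightarrow> nat set \<Rightarrow> nat \<Rightarrow> nat set \<Rightarrow> (int \<Rightarrow> int) set" where
  "desc_class n T x A =
     {w \<in> even_signed_perms n. descD n w \<subseteq> T \<and> (\<lambda>i. nat \<bar>w i\<bar>) ` {1..int x} = A}"

text \<open>Position \<open>0\<close> reads \<open>w 2\<close>, so for \<open>x \<ge> 2\<close> the positions \<open>0..x\<close> see exactly the
  absolute values of \<open>w 1, \<dots>, w x\<close>.\<close>

lemma abs_wD_in_first_values:
  assumes "2 \<le> x" "j \<le> x"
  shows "nat \<bar>wD w j\<bar> \<in> (\<lambda>i. nat \<bar>w i\<bar>) ` {1..int x}"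
  using assms by (auto simp: wD_def intro!: image_eqI[where x = "if j = 0 then 2 else int j"])

lemma abs_wD_notin_first_values:
  assumes w: "w \<in> signed_perms n" and "x < j" "j \<le> n"
  shows "nat \<bar>wD w j\<bar> \<in> {1..n} - (\<lambda>i. nat \<bar>w i\<bar>) ` {1..int x}"
proof -
  have j: "int j \<in> signed_set n" "wD w j = w (int j)" using assms by (auto simp: signed_set_def wD_def)
  have "nat \<bar>w (int j)\<bar> \<noteq> nat \<bar>w i\<bar>" if "i \<in> {1..int x}" for i
    using signed_perms_abs_eqD[OF w j(1), of i] that assms
    by (auto simp: signed_set_def eq_nat_nat_iff)
  then have "nat \<bar>w (int j)\<bar> \<notin> (\<lambda>i. nat \<bar>w i\<bar>) ` {1..int x}" by blast
  then show ?thesis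
    using j signed_perms_in_signed_set[OF w j(1)] by (auto simp: signed_set_def)
qed

definition abs_relabel :: "nat \<Rightarrow> (nat \<Rightarrow> nat) \<Rightarrow> int \<Rightarrow> int" where
  "abs_relabel n \<rho> v = (if v \<in> signed_set n then sgn v * int (\<rho> (nat \<bar>v\<bar>)) else v)"

locale relabelling =
  fixes n :: nat and \<rho> :: "nat \<Rightarrow> nat" and A :: "nat set"
  assumes bij: "bij_betw \<rho> {1..n} {1..n}" and subset: "A \<subseteq> {1..n}"
    and mono_in: "strict_mono_on A \<rho>" and mono_out: "strict_mono_on ({1..n} - A) \<rho>"
begin

lemma rho_abs_in: "v \<in> signed_set n \<Longrightarrow> \<rho> (nat \<bar>v\<bar>) \<in> {1..n}"
  using bij nat_abs_in_signed_set by (auto simp: bij_betw_def)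

lemma abs_relabel_uminus: "abs_relabel n \<rho> (- v) = - abs_relabel n \<rho> v"
  by (simp add: abs_relabel_def sgn_minus)

lemma abs_relabel_in_signed_set:
  "v \<in> signed_set n \<Longrightarrow> abs_relabel n \<rho> v \<in> signed_set n"
  using rho_abs_in[of v] by (auto simp: abs_relabel_def signed_set_def abs_mult)

lemma abs_abs_relabel: "v \<in> signed_set n \<Longrightarrow> nat \<bar>abs_relabel n \<rho> v\<bar> = \<rho> (nat \<bar>v\<bar>)"
  by (auto simp: abs_relabel_def signed_set_def abs_mult)

lemma abs_relabel_neg_iff: "v \<in> signed_set n \<Longrightarrow> abs_relabel n \<rho> v < 0 \<longleftrightarrow> v < 0"
  using rho_abs_in[of v] by (auto simp: abs_relabel_def signed_set_def sgn_if)

lemma abs_relabel_signed_perms: "abs_relabel n \<rho> \<in> signed_perms n"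
proof -
  have "inj_on (abs_relabel n \<rho>) (signed_set n)"
  proof (rule inj_onI)
    fix a b assume ab: "a \<in> signed_set n" "b \<in> signed_set n" "abs_relabel n \<rho> a = abs_relabel n \<rho> b"
    then have "\<rho> (nat \<bar>a\<bar>) = \<rho> (nat \<bar>b\<bar>)" using abs_abs_relabel by metis
    then have "nat \<bar>a\<bar> = nat \<bar>b\<bar>"
      by (rule inj_onD[OF bij_betw_imp_inj_on[OF bij]]) (use ab nat_abs_in_signed_set in auto)
    moreover have "a < 0 \<longleftrightarrow> b < 0" using ab abs_relabel_neg_iff by metis
    ultimately show "a = b" by (auto simp: abs_if split: if_splits)
  qed
  then have "bij_betw (abs_relabel n \<rho>) (signed_set n) (signed_set n)"
    using abs_relabel_in_signed_set by (simp add: bij_betw_def endo_inj_surj image_subsetI)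
  then show ?thesis
    by (auto simp: signed_perms_def abs_relabel_uminus) (simp add: abs_relabel_def)
qed

lemma abs_relabel_strict_mono_on:
  assumes "strict_mono_on X \<rho>" "X \<subseteq> {1..n}"
  shows "strict_mono_on {v \<in> signed_set n. nat \<bar>v\<bar> \<in> X} (abs_relabel n \<rho>)"
proof (rule strict_mono_onI)
  fix a b assume a: "a \<in> {v \<in> signed_set n. nat \<bar>v\<bar> \<in> X}" and b: "b \<in> {v \<in> signed_set n. nat \<bar>v\<bar> \<in> X}"
    and "a < b"
  then consider "a < 0" "0 < b" | "0 < a" "0 < b" "nat \<bar>a\<bar> < nat \<bar>b\<bar>"
    | "a < 0" "b < 0" "nat \<bar>b\<bar> < nat \<bar>a\<bar>"
    by (force simp: signed_set_def)
  then show "abs_relabel n \<rho> a < abs_relabel n \<rho> b"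
  proof cases
    case 1
    then have "abs_relabel n \<rho> a < 0" "\<not> abs_relabel n \<rho> b < 0"
      using a b abs_relabel_neg_iff by auto
    then show ?thesis by linarith
  next
    case 2
    then show ?thesis using a b strict_mono_onD[OF assms(1)] by (auto simp: abs_relabel_def)
  next
    case 3
    then show ?thesis using a b strict_mono_onD[OF assms(1)] by (auto simp: abs_relabel_def)
  qed
qed

lemma descD_relabel_subset:
  assumes w: "w \<in> signed_perms n" and wA: "(\<lambda>i. nat \<bar>w i\<bar>) ` {1..int x} = A"
    and "2 \<le> x" "x < n"
  shows "descD n (abs_relabel n \<rho> \<circ> w) \<subseteq> insert x (descD n w)"
proof
  fix i assume "i \<in> descD n (abs_relabel n \<rho> \<circ> w)"
  then have "i < n" and gt: "abs_relabel n \<rho> (wD w i) > abs_relabel n \<rho> (wD w (i + 1))"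
    using descD_comp[of "abs_relabel n \<rho>" n w, OF abs_relabel_uminus] by auto
  have ins: "wD w i \<in> signed_set n" "wD w (i + 1) \<in> signed_set n"
    using wD_in_signed_set[OF w, of i] wD_in_signed_set[OF w, of "i + 1"] \<open>i < n\<close> assms(3,4)
    by auto
  have reverse: "wD w i > wD w (i + 1)" if "strict_mono_on X \<rho>" "X \<subseteq> {1..n}"
    "nat \<bar>wD w i\<bar> \<in> X" "nat \<bar>wD w (i + 1)\<bar> \<in> X" for X
    using strict_mono_on_less[OF abs_relabel_strict_mono_on[OF that(1,2)],
        of "wD w (i + 1)" "wD w i"] gt ins that(3,4)
    by simp
  consider "i + 1 \<le> x" | "i = x" | "x < i" by linarith
  then have "i = x \<or> wD w i > wD w (i + 1)"
  proof cases
    case 1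
    then show ?thesis
      using abs_wD_in_first_values[OF assms(3), of _ w] wA mono_in subset reverse[of A] by simp
  next
    case 3
    then show ?thesis
      using abs_wD_notin_first_values[OF w, of x] wA mono_out \<open>i < n\<close> reverse[of "{1..n} - A"]
      by simp
  qed simp
  then show "i \<in> insert x (descD n w)" using \<open>i < n\<close> by (auto simp: descD_def)
qed

lemma desc_class_relabel:
  assumes w: "w \<in> desc_class n T x A" and "x \<in> T" "2 \<le> x" "x < n"
  shows "abs_relabel n \<rho> \<circ> w \<in> desc_class n T x (\<rho> ` A)"
proof -
  have we: "w \<in> even_signed_perms n" and "descD n w \<subseteq> T"
    and wA: "(\<lambda>i. nat \<bar>w i\<bar>) ` {1..int x} = A"
    using w by (auto simp: desc_class_def)
  have wsp: "w \<in> signed_perms n" using we by (rule even_signed_perms_signed_perms)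
  have "w i \<in> signed_set n" if "i \<in> {1..int n}" for i
    using signed_perms_in_signed_set[OF wsp] that by (auto simp: signed_set_def)
  then have "{i \<in> {1..int n}. (abs_relabel n \<rho> \<circ> w) i < 0} = {i \<in> {1..int n}. w i < 0}"
    using abs_relabel_neg_iff by auto
  then have "abs_relabel n \<rho> \<circ> w \<in> even_signed_perms n"
    using we signed_perms_comp[OF abs_relabel_signed_perms wsp] by (simp add: even_signed_perms_def)
  moreover have "(\<lambda>i. nat \<bar>(abs_relabel n \<rho> \<circ> w) i\<bar>) ` {1..int x} = \<rho> ` A"
    unfolding wA[symmetric] image_image
    using abs_abs_relabel signed_perms_in_signed_set[OF wsp] assms(4)
    by (intro image_cong) (auto simp: signed_set_def)
  moreover have "descD n (abs_relabel n \<rho> \<circ> w) \<subseteq> T"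
    using descD_relabel_subset[OF wsp wA assms(3,4)] \<open>x \<in> T\<close> \<open>descD n w \<subseteq> T\<close> by blast
  ultimately show ?thesis by (simp add: desc_class_def)
qed

lemma card_desc_class_le:
  assumes "x \<in> T" "2 \<le> x" "x < n"
  shows "card (desc_class n T x A) \<le> card (desc_class n T x (\<rho> ` A))"
proof (rule card_inj_on_le)
  have "inj_on (abs_relabel n \<rho>) (signed_set n)"
    using abs_relabel_signed_perms by (simp add: signed_perms_def bij_betw_def)
  moreover have "v \<in> signed_perms n" if "v \<in> desc_class n T x A" for v
    using that by (simp add: desc_class_def even_signed_perms_def)
  ultimately show "inj_on (\<lambda>w. abs_relabel n \<rho> \<circ> w) (desc_class n T x A)"
    by (intro inj_onI ext) (metis comp_apply inj_onD signed_perms_fixes signed_perms_in_signed_set)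
  show "(\<lambda>w. abs_relabel n \<rho> \<circ> w) ` desc_class n T x A \<subseteq> desc_class n T x (\<rho> ` A)"
    using desc_class_relabel assms by auto
  show "finite (desc_class n T x (\<rho> ` A))"
    by (rule finite_subset[OF _ finite_even_signed_perms]) (auto simp: desc_class_def)
qed

end

lemma obtain_relabelling:
  assumes A: "A \<subseteq> {1..n}" and B: "B \<subseteq> {1..n}" and "card A = card B"
  obtains \<rho> where "relabelling n \<rho> A" "\<rho> ` A = B"
proof -
  have fin: "finite A" "finite B" using A B finite_subset by auto
  obtain h1 where h1: "bij_betw h1 A B" "strict_mono_on A h1"
    using obtain_strict_mono_bij_betw[OF fin \<open>card A = card B\<close>] .
  have "card ({1..n} - A) = card ({1..n} - B)"
    using A B \<open>card A = card B\<close> fin by (simp add: card_Diff_subset)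
  then obtain h2 where h2: "bij_betw h2 ({1..n} - A) ({1..n} - B)" "strict_mono_on ({1..n} - A) h2"
    using obtain_strict_mono_bij_betw by blast
  define \<rho> where "\<rho> a = (if a \<in> A then h1 a else h2 a)" for a
  have b1: "bij_betw \<rho> A B"
    using h1(1) by (rule bij_betw_cong[THEN iffD1, rotated]) (simp add: \<rho>_def)
  have b2: "bij_betw \<rho> ({1..n} - A) ({1..n} - B)"
    using h2(1) by (rule bij_betw_cong[THEN iffD1, rotated]) (simp add: \<rho>_def)
  have "bij_betw \<rho> {1..n} {1..n}"
    using bij_betw_combine[OF b1 b2] A B by (simp add: Un_Diff_cancel Un_absorb1)
  moreover have "strict_mono_on A \<rho>" "strict_mono_on ({1..n} - A) \<rho>"
    using h1(2) h2(2) by (auto simp: strict_mono_on_def \<rho>_def)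
  ultimately have "relabelling n \<rho> A" using A by (simp add: relabelling_def)
  then show ?thesis using that b1 by (simp add: bij_betw_def)
qed

lemma card_desc_class_eq:
  assumes "A \<subseteq> {1..n}" "B \<subseteq> {1..n}" "card A = card B" "x \<in> T" "2 \<le> x" "x < n"
  shows "card (desc_class n T x A) = card (desc_class n T x B)"
proof (rule antisym)
  obtain \<rho> where "relabelling n \<rho> A" "\<rho> ` A = B" using obtain_relabelling assms(1-3) .
  then show "card (desc_class n T x A) \<le> card (desc_class n T x B)"
    using relabelling.card_desc_class_le assms(4-6) by metis
next
  obtain \<rho> where "relabelling n \<rho> B" "\<rho> ` B = A" using obtain_relabelling assms(1-3) by metis
  then show "card (desc_class n T x B) \<le> card (desc_class n T x A)"
    using relabelling.card_desc_class_le assms(4-6) by metis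
qed

lemma abs_image_signed_perms:
  assumes w: "w \<in> signed_perms n" and "x \<le> n"
  shows "(\<lambda>i. nat \<bar>w i\<bar>) ` {1..int x} \<subseteq> {1..n}" "card ((\<lambda>i. nat \<bar>w i\<bar>) ` {1..int x}) = x"
proof -
  have ins: "i \<in> signed_set n" if "i \<in> {1..int x}" for i
    using that assms(2) by (auto simp: signed_set_def)
  show "(\<lambda>i. nat \<bar>w i\<bar>) ` {1..int x} \<subseteq> {1..n}"
    using nat_abs_in_signed_set[OF signed_perms_in_signed_set[OF w ins]] by blast
  have "inj_on (\<lambda>i. nat \<bar>w i\<bar>) {1..int x}"
  proof (rule inj_onI)
    fix i j assume ij: "i \<in> {1..int x}" "j \<in> {1..int x}" "nat \<bar>w i\<bar> = nat \<bar>w j\<bar>"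
    then have "\<bar>i\<bar> = \<bar>j\<bar>" using signed_perms_abs_eqD[OF w ins[OF ij(1)] ins[OF ij(2)]] by simp
    then show "i = j" using ij(1,2) by auto
  qed
  then show "card ((\<lambda>i. nat \<bar>w i\<bar>) ` {1..int x}) = x" by (simp add: card_image)
qed

text \<open>The absolute values of \<open>w 1, \<dots>, w x\<close> may be any \<open>x\<close>-subset of \<open>{1..n}\<close>, and
  relabelling shows that each choice is equally frequent.\<close>

lemma alphaD_eq_choose_mult:
  assumes "x \<in> T" "2 \<le> x" "x < n"
  shows "alphaD n T = (n choose x) * card (desc_class n T x {1..x})"
proof -
  define Sub where "Sub = {A. A \<subseteq> {1..n} \<and> card A = x}"
  have "(\<lambda>i. nat \<bar>w i\<bar>) ` {1..int x} \<in> Sub" if "w \<in> signed_perms n" for w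
    using abs_image_signed_perms[OF that] assms(3) by (simp add: Sub_def)
  then have "{w \<in> even_signed_perms n. descD n w \<subseteq> T} = (\<Union>A\<in>Sub. desc_class n T x A)"
    by (auto simp: desc_class_def even_signed_perms_def)
  then have "alphaD n T = (\<Sum>A\<in>Sub. card (desc_class n T x A))"
    unfolding alphaD_def
    by (simp, intro card_UN_disjoint)
      (auto simp: Sub_def desc_class_def intro: finite_subset[OF _ finite_even_signed_perms])
  also have "\<dots> = (\<Sum>A\<in>Sub. card (desc_class n T x {1..x}))"
    using card_desc_class_eq assms by (intro sum.cong) (auto simp: Sub_def)
  also have "\<dots> = (n choose x) * card (desc_class n T x {1..x})"
    using n_subsets[of "{1..n}" x] by (simp add: Sub_def)
  finally show ?thesis .
qed

text \<open>Moebius inversion along \<open>x\<close>: \<open>alphaD n (insert x S)\<close> is the sum of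
  \<open>betaD n S' + betaD n (insert x S')\<close> over \<open>S' \<subseteq> S\<close> and is divisible by \<open>p\<close>; induction
  on \<open>S\<close> peels off the summand \<open>S' = S\<close>.\<close>

lemma dvd_betaD_add_insert:
  assumes "p dvd (n choose x)" "2 \<le> x" "x < n" "S \<subseteq> {0..<n} - {x}"
  shows "p dvd betaD n S + betaD n (insert x S)"
  using assms(4)
proof (induction "card S" arbitrary: S rule: less_induct)
  case less
  have fin: "finite S" and "x \<notin> S" using less.prems finite_subset by auto
  define f where "f S' = betaD n S' + betaD n (insert x S')" for S'
  have "alphaD n (insert x S) = (\<Sum>S'\<in>Pow S. betaD n S') + (\<Sum>S'\<in>insert x ` Pow S. betaD n S')"
    using fin \<open>x \<notin> S\<close>
    by (simp add: alphaD_eq_sum_betaD Pow_insert, intro sum.union_disjoint) auto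
  also have "(\<Sum>S'\<in>insert x ` Pow S. betaD n S') = (\<Sum>S'\<in>Pow S. betaD n (insert x S'))"
    using \<open>x \<notin> S\<close> by (intro sum.reindex_cong[of "insert x"]) (auto simp: inj_on_def)
  finally have "alphaD n (insert x S) = f S + (\<Sum>S'\<in>Pow S - {S}. f S')"
    using fin by (simp add: f_def sum.distrib sum.remove[of "Pow S" S])
  moreover have "p dvd alphaD n (insert x S)"
    using alphaD_eq_choose_mult[of x "insert x S" n] assms(1-3) by simp
  moreover have "p dvd (\<Sum>S'\<in>Pow S - {S}. f S')"
    using less.hyps less.prems fin psubset_card_mono[of S] by (intro dvd_sum) (auto simp: f_def)
  ultimately show ?case by (simp add: f_def dvd_add_left_iff)
qed

section \<open>Residues modulo p\<close>

lemma sum_Pow_Un_disjoint: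
  assumes "finite A" "finite B" "A \<inter> B = {}"
  shows "(\<Sum>S\<in>Pow (A \<union> B). f S) = (\<Sum>U\<in>Pow A. \<Sum>Y\<in>Pow B. f (U \<union> Y))"
proof -
  have "bij_betw (\<lambda>(U, Y). U \<union> Y) (Pow A \<times> Pow B) (Pow (A \<union> B))"
    by (rule bij_betw_byWitness[where f' = "\<lambda>S. (S \<inter> A, S \<inter> B)"]) (use assms(3) in auto)
  then show ?thesis
    using assms by (simp add: sum.cartesian_product sum.reindex_bij_betw[symmetric] case_prod_beta')
qed

lemma sum_Pow_complement_pairs:
  fixes g :: "'a set \<Rightarrow> 'b::comm_semiring_1"
  assumes "finite Q" "q \<in> Q" "\<And>U. U \<subseteq> Q \<Longrightarrow> g (Q - U) = g U"
  shows "(\<Sum>U\<in>Pow Q. g U) = 2 * (\<Sum>U\<in>{U \<in> Pow Q. q \<notin> U}. g U)"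
proof -
  have "bij_betw (\<lambda>U. Q - U) {U \<in> Pow Q. q \<notin> U} {U \<in> Pow Q. q \<in> U}"
    by (rule bij_betw_byWitness[where f' = "\<lambda>U. Q - U"]) (use assms(2) in auto)
  then have "(\<Sum>U\<in>{U \<in> Pow Q. q \<in> U}. g U) = (\<Sum>U\<in>{U \<in> Pow Q. q \<notin> U}. g U)"
    using assms(3) by (simp add: sum.reindex_bij_betw[symmetric])
  moreover have "(\<Sum>U\<in>Pow Q. g U) = (\<Sum>U\<in>{U \<in> Pow Q. q \<notin> U}. g U) + (\<Sum>U\<in>{U \<in> Pow Q. q \<in> U}. g U)"
    using assms(1) by (subst sum.union_disjoint[symmetric]) (auto intro: sum.cong)
  ultimately show ?thesis by (simp add: mult_2)
qed

lemma sum_Pow_sign: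
  fixes f :: "int \<Rightarrow> 'a::comm_semiring_1"
  assumes "finite C" "C \<noteq> {}"
  shows "(\<Sum>Y\<in>Pow C. f ((-1) ^ card Y)) = 2 ^ (card C - 1) * (f 1 + f (-1))"
proof -
  define Ev Od where "Ev = {Y \<in> Pow C. even (card Y)}" and "Od = {Y \<in> Pow C. odd (card Y)}"
  have part: "Pow C = Ev \<union> Od" "Ev \<inter> Od = {}" by (auto simp: Ev_def Od_def)
  have fin: "finite Ev" "finite Od" using assms(1) by (simp_all add: Ev_def Od_def)
  have "card Ev = card Od"
    using card_subsupersets_even_odd[OF assms(1), of "{}"] assms(2)
    by (simp add: Ev_def Od_def Pow_def psubset_eq)
  moreover have "card Ev + card Od = 2 ^ card C"
    using part fin card_Un_disjoint[of Ev Od] card_Pow[OF assms(1)] by simp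
  ultimately have card: "card Ev = 2 ^ (card C - 1)" "card Od = 2 ^ (card C - 1)"
    using assms by (auto simp: card_gt_0_iff power_eq_if split: if_splits)
  have "(\<Sum>Y\<in>Pow C. f ((-1) ^ card Y)) = (\<Sum>Y\<in>Ev. f ((-1) ^ card Y)) + (\<Sum>Y\<in>Od. f ((-1) ^ card Y))"
    using part fin by (simp add: sum.union_disjoint)
  also have "\<dots> = (\<Sum>Y\<in>Ev. f 1) + (\<Sum>Y\<in>Od. f (-1))"
    by (auto simp: Ev_def Od_def intro!: sum.cong arg_cong2[where f = "(+)"])
  finally show ?thesis using card by (simp add: algebra_simps)
qed

lemma betaD_insert_cong:
  assumes "x \<in> dvd_choose_positions p n" "S \<subseteq> {0..<n}" "x \<notin> S"
  shows "[int (betaD n (insert x S)) = - int (betaD n S)] (mod int p)"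
proof -
  have "p dvd betaD n S + betaD n (insert x S)"
    by (rule dvd_betaD_add_insert) (use assms in \<open>auto simp: dvd_choose_positions_def\<close>)
  then show ?thesis
    by (simp add: cong_iff_dvd_diff add.commute flip: of_nat_add int_dvd_int_iff)
qed

lemma betaD_Un_cong:
  assumes "U \<subseteq> {0..<n}" "Y \<subseteq> dvd_choose_positions p n" "U \<inter> Y = {}"
  shows "[int (betaD n (U \<union> Y)) = (-1) ^ card Y * int (betaD n U)] (mod int p)"
proof -
  have "finite Y"
    by (meson assms(2) dvd_choose_positions_subset finite_atLeastLessThan finite_subset)
  then show ?thesis
    using assms(2,3)
  proof (induction Y)
    case (insert y Y)
    then have "[int (betaD n (insert y (U \<union> Y))) = - int (betaD n (U \<union> Y))] (mod int p)"
      using assms(1) dvd_choose_positions_subset[of p n] by (intro betaD_insert_cong) auto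
    moreover have "[- int (betaD n (U \<union> Y)) = - ((-1) ^ card Y * int (betaD n U))] (mod int p)"
      using insert by (simp add: cong_minus_minus_iff)
    ultimately show ?case using insert.hyps by (auto dest: cong_trans)
  qed simp
qed

lemma cD_eq_card_subsets:
  "cD p i n = card {S \<in> Pow {0..<n}. [int (betaD n S) = i] (mod int p)}"
proof -
  have inj: "inj_on desc_comp {\<alpha>. pseudo_comp n \<alpha>}"
    and img: "desc_comp ` {\<alpha>. pseudo_comp n \<alpha>} = Pow {0..<n}"
    using bij_betw_desc_comp[of n] by (auto simp: bij_betw_def)
  have "{S \<in> Pow {0..<n}. [int (betaD n S) = i] (mod int p)}
      = desc_comp ` {\<alpha>. pseudo_comp n \<alpha> \<and> [int (betaD n (desc_comp \<alpha>)) = i] (mod int p)}"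
    unfolding img[symmetric] by auto
  moreover have "inj_on desc_comp {\<alpha>. pseudo_comp n \<alpha> \<and> [int (betaD n (desc_comp \<alpha>)) = i] (mod int p)}"
    using inj by (rule inj_on_subset) auto
  ultimately show ?thesis by (simp add: card_image cD_def rD_def betaD_def)
qed

definition sign_hits :: "nat \<Rightarrow> int \<Rightarrow> int \<Rightarrow> nat" where
  "sign_hits p i a = of_bool [a = i] (mod int p) + of_bool [- a = i] (mod int p)"

lemma sign_hits_uminus_arg: "sign_hits p i (- a) = sign_hits p i a"
  by (simp add: sign_hits_def)

lemma sign_hits_uminus: "sign_hits p (- i) a = sign_hits p i a"
  using cong_minus_minus_iff[of a i "int p"] cong_minus_minus_iff[of "- a" i "int p"]
  by (simp add: sign_hits_def add.commute)

lemma sign_hits_cong: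
  assumes "[a = b] (mod int p)"
  shows "sign_hits p i a = sign_hits p i b"
proof -
  have "[- a = - b] (mod int p)" using assms by (simp add: cong_minus_minus_iff)
  then have "[a = i] (mod int p) \<longleftrightarrow> [b = i] (mod int p)"
    "[- a = i] (mod int p) \<longleftrightarrow> [- b = i] (mod int p)"
    using assms by (meson cong_sym cong_trans)+
  then show ?thesis by (simp add: sign_hits_def)
qed

lemma sign_hits_zero: "[i = 0] (mod int p) \<Longrightarrow> sign_hits p i a = 2 * of_bool [a = i] (mod int p)"
  by (simp add: sign_hits_def) (meson cong_0_iff cong_sym cong_trans dvd_minus_iff)

text \<open>Modulo \<open>p\<close>, adding a position of \<open>C\<close> only changes the sign of \<open>betaD\<close>, and half of
  the subsets of \<open>C\<close> have even size.\<close>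

lemma card_residue_subsets:
  fixes p n :: nat
  defines "C \<equiv> dvd_choose_positions p n"
  assumes "C \<noteq> {}"
  shows "card {S \<in> Pow {0..<n}. [int (betaD n S) = i] (mod int p)}
    = 2 ^ (card C - 1) * (\<Sum>U\<in>Pow ({0..<n} - C). sign_hits p i (int (betaD n U)))"
proof -
  define Q where "Q = {0..<n} - C"
  have QC: "{0..<n} = Q \<union> C" "Q \<inter> C = {}" and fin: "finite Q" "finite C"
    using dvd_choose_positions_subset[of p n] finite_subset by (auto simp: Q_def C_def)
  have "card {S \<in> Pow {0..<n}. [int (betaD n S) = i] (mod int p)}
      = (\<Sum>S\<in>Pow {0..<n}. of_bool [int (betaD n S) = i] (mod int p))"
    by (simp add: Int_def conj_commute)
  also have "\<dots> = (\<Sum>U\<in>Pow Q. \<Sum>Y\<in>Pow C. of_bool [int (betaD n (U \<union> Y)) = i] (mod int p))"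
    unfolding QC(1) using sum_Pow_Un_disjoint[OF fin QC(2)] .
  also have "\<dots> = (\<Sum>U\<in>Pow Q. \<Sum>Y\<in>Pow C.
      of_bool [(-1) ^ card Y * int (betaD n U) = i] (mod int p))"
  proof (intro sum.cong refl)
    fix U Y assume "U \<in> Pow Q" "Y \<in> Pow C"
    then have "[int (betaD n (U \<union> Y)) = (-1) ^ card Y * int (betaD n U)] (mod int p)"
      using QC by (intro betaD_Un_cong) (auto simp: C_def)
    then have "[int (betaD n (U \<union> Y)) = i] (mod int p)
        \<longleftrightarrow> [(-1) ^ card Y * int (betaD n U) = i] (mod int p)"
      by (meson cong_sym cong_trans)
    then show "of_bool [int (betaD n (U \<union> Y)) = i] (mod int p)
        = (of_bool [(-1) ^ card Y * int (betaD n U) = i] (mod int p) :: nat)"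
      by simp
  qed
  also have "\<dots> = (\<Sum>U\<in>Pow Q. 2 ^ (card C - 1) * sign_hits p i (int (betaD n U)))"
  proof (rule sum.cong[OF refl])
    fix U
    show "(\<Sum>Y\<in>Pow C. of_bool [(-1) ^ card Y * int (betaD n U) = i] (mod int p))
        = 2 ^ (card C - 1) * sign_hits p i (int (betaD n U))"
      using sum_Pow_sign[OF fin(2) assms(2),
          of "\<lambda>e. of_bool [e * int (betaD n U) = i] (mod int p) :: nat"]
      by (simp add: sign_hits_def)
  qed
  finally show ?thesis by (simp add: Q_def sum_distrib_left)
qed

lemma sign_hits_betaD_complement:
  fixes p n :: nat
  defines "Q \<equiv> {0..<n} - dvd_choose_positions p n"
  assumes "2 \<le> n" "U \<subseteq> Q"
  shows "sign_hits p i (int (betaD n (Q - U))) = sign_hits p i (int (betaD n U))"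
proof -
  have "U \<subseteq> {0..<n}" using assms(3) by (auto simp: Q_def)
  then have "betaD n U = betaD n ({0..<n} - U)" using betaD_complement assms(2) by metis
  also have "{0..<n} - U = (Q - U) \<union> dvd_choose_positions p n"
    using assms(3) dvd_choose_positions_subset[of p n] by (auto simp: Q_def)
  finally have "int (betaD n U) = int (betaD n ((Q - U) \<union> dvd_choose_positions p n))"
    by simp
  also have "[\<dots> = (-1) ^ card (dvd_choose_positions p n) * int (betaD n (Q - U))] (mod int p)"
    by (rule betaD_Un_cong) (auto simp: Q_def)
  finally show ?thesis
    by (auto simp: sign_hits_cong[of _ _ p i] minus_one_power_iff sign_hits_uminus_arg)
qed

lemma cD_uminus:
  assumes "dvd_choose_positions p n \<noteq> {}"
  shows "cD p (- i) n = cD p i n"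
  using card_residue_subsets[OF assms] by (simp add: cD_eq_card_subsets sign_hits_uminus)

text \<open>Complementation in \<open>{0..<n} - C\<close>, a set containing \<open>0\<close>, pairs up the sets \<open>U\<close>
  summed over in \<open>card_residue_subsets\<close>; for \<open>i \<equiv> 0\<close> both signs hit at once.\<close>

lemma two_pow_dvd_cD:
  assumes "2 \<le> n" "dvd_choose_positions p n \<noteq> {}"
  shows "2 ^ (card (dvd_choose_positions p n) + of_bool [i = 0] (mod int p)) dvd cD p i n"
proof -
  define C Q where "C = dvd_choose_positions p n" and "Q = {0..<n} - C"
  define Q0 where "Q0 = {U \<in> Pow Q. 0 \<notin> U}"
  have "0 \<in> Q" using assms(1) dvd_choose_positions_subset[of p n] by (auto simp: Q_def C_def)
  then have "(\<Sum>U\<in>Pow Q. sign_hits p i (int (betaD n U)))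
      = 2 * (\<Sum>U\<in>Q0. sign_hits p i (int (betaD n U)))"
    unfolding Q0_def
    by (intro sum_Pow_complement_pairs) (use sign_hits_betaD_complement assms(1) in \<open>auto simp: Q_def C_def\<close>)
  then have cD: "cD p i n = 2 ^ card C * (\<Sum>U\<in>Q0. sign_hits p i (int (betaD n U)))"
    using card_residue_subsets[OF assms(2)] assms(2) finite_subset[OF dvd_choose_positions_subset]
    by (simp add: cD_eq_card_subsets C_def Q_def card_gt_0_iff power_eq_if)
  show ?thesis
  proof (cases "[i = 0] (mod int p)")
    case True
    then have "cD p i n = 2 ^ Suc (card C) * (\<Sum>U\<in>Q0. of_bool [int (betaD n U) = i] (mod int p))"
      using cD by (simp add: sign_hits_zero sum_distrib_left ac_simps)
    then show ?thesis using True by (simp flip: C_def)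
  qed (simp add: cD flip: C_def)
qed

lemma two_dvd_cD:
  assumes "2 \<le> n"
  shows "2 dvd cD p i n"
proof -
  have "cD p i n = (\<Sum>S\<in>Pow {0..<n}. of_bool [int (betaD n S) = i] (mod int p))"
    by (simp add: cD_eq_card_subsets Int_def conj_commute)
  also have "\<dots> = 2 * (\<Sum>S\<in>{S \<in> Pow {0..<n}. 0 \<notin> S}. of_bool [int (betaD n S) = i] (mod int p))"
    using assms betaD_complement[OF _ assms] by (intro sum_Pow_complement_pairs) auto
  finally show ?thesis by simp
qed

theorem corollary5p4:
  fixes p n k :: nat and d :: "nat \<Rightarrow> nat"
  assumes "prime p" and "odd p" and "n \<ge> 4"
    and "\<And>j. j \<le> k \<Longrightarrow> d j < p" and "d k > 0"
    and "n = (\<Sum>j\<le>k. d j * p ^ j)"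
  shows "(\<not> (\<forall>j<k. d j = p - 1) \<longrightarrow> (\<forall>i::int. cD p i n = cD p (- i) n))
    \<and> (\<forall>i::int.
         let N = (\<Prod>j\<le>k. d j + 1) in
         (((d 0 > 0 \<and> [i = 0] (mod int p)) \<or> (\<forall>j<k. d j = p - 1))
            \<longrightarrow> 2 ^ (n + 2 - N) dvd cD p i n)
       \<and> ((\<not> ((d 0 > 0 \<and> [i = 0] (mod int p)) \<or> (\<forall>j<k. d j = p - 1))
            \<and> d 0 = 0 \<and> \<not> [i = 0] (mod int p))
            \<longrightarrow> 2 ^ (n - N) dvd cD p i n)
       \<and> ((\<not> ((d 0 > 0 \<and> [i = 0] (mod int p)) \<or> (\<forall>j<k. d j = p - 1))
            \<and> \<not> (d 0 = 0 \<and> \<not> [i = 0] (mod int p)))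
            \<longrightarrow> 2 ^ (n + 1 - N) dvd cD p i n))"
proof -
  define C N where "C = dvd_choose_positions p n" and "N = (\<Prod>j\<le>k. d j + 1)"
  have bound: "n + of_bool (0 < d 0) \<le> card C + N"
    unfolding C_def N_def using assms(1,3,4,6) by (intro card_dvd_choose_positions_ge) auto
  have C: "C \<noteq> {}" if "\<not> (\<forall>j<k. d j = p - 1)"
    using dvd_choose_positions_ne_empty[of p k d] assms that by (simp add: C_def)
  have pow: "2 ^ e dvd cD p i n"
    if "\<not> (\<forall>j<k. d j = p - 1)" "e \<le> card C + of_bool [i = 0] (mod int p)" for e i
  proof -
    have "2 ^ (card C + of_bool [i = 0] (mod int p)) dvd cD p i n"
      unfolding C_def using assms(3) C[OF that(1)] by (intro two_pow_dvd_cD) (auto simp: C_def)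
    then show ?thesis using le_imp_power_dvd[OF that(2)] dvd_trans by blast
  qed
  have "n + 1 = N" if "\<forall>j<k. d j = p - 1"
    using digits_sum_all_max[of p k d] assms(1,6) that by (simp add: N_def prime_gt_0_nat)
  then show ?thesis
    using cD_uminus[of p n] C two_dvd_cD[of n p] assms(3) bound pow
    unfolding Let_def N_def[symmetric] C_def[symmetric]
    by (cases "\<forall>j<k. d j = p - 1") (auto intro: pow)
qed

end
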